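(* Let $n\ge2$ and let $(V,\langle-,\ldots,-\rangle_n)$ be an infinite-dimensional non-degenerate alternating (resp. symmetric) $n$-linear space over a field $K$, and let $U$ be a finite-dimensional subspace of $V$. Then for any linearly independent $t_1,\ldots,t_m\in\lozenge^{n-1}V$ and any $k_1,\ldots,k_m\in K$ there is $w\in V$, linearly independent from $U$, such that $\langle t_i,w\rangle_2=k_i$ for all $i\le m$.
   Context: $\lozenge^{n-1}V$ is $\bigwedge^{n-1}V$ (alternating case) or $\bigvee^{n-1}V$ (symmetric case); $\langle-,-\rangle_2$ is the induced bilinear form on $(\lozenge^{n-1}V)\times V$ with $\langle\overline{v_1\otimes\cdots\otimes v_{n-1}},v\rangle_2=\langle v_1,\ldots,v_{n-1},v\rangle_n$ extended linearly. Non-degenerate: for every nonzero $t\in\lozenge^{n-1}V$ there is $w\in V$ with $\langle t,w\rangle_2\ne0$. *)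

theory Defs
  imports Complex_Main
begin

text \<open>An n-linear form on V is modelled as a function on lists of vectors; only lists
  of length n are meaningful.  The scalar multiplication of V over the field K is scale.\<close>

definition multilinear_form :: "('k::field \<Rightarrow> 'v::ab_group_add \<Rightarrow> 'v) \<Rightarrow> nat \<Rightarrow> ('v list \<Rightarrow> 'k) \<Rightarrow> bool" where
  "multilinear_form scale n form \<longleftrightarrow>
     (\<forall>xs. length xs = n \<longrightarrow> (\<forall>i<n. \<forall>a x y.
        form (xs[i := scale a x + y]) = a * form (xs[i := x]) + form (xs[i := y])))"

definition alternating_form :: "nat \<Rightarrow> ('v list \<Rightarrow> 'k::field) \<Rightarrow> bool" where
  "alternating_form n form \<longleftrightarrow>
     (\<forall>xs. length xs = n \<longrightarrow> (\<forall>i<n. \<forall>j<n. i \<noteq> j \<and> xs ! i = xs ! j \<longrightarrow> form xs = 0))"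

definition symmetric_form :: "nat \<Rightarrow> ('v list \<Rightarrow> 'k::field) \<Rightarrow> bool" where
  "symmetric_form n form \<longleftrightarrow>
     (\<forall>xs. length xs = n \<longrightarrow> (\<forall>i<n. \<forall>j<n. form (xs[i := xs ! j, j := xs ! i]) = form xs))"

text \<open>Free vector space on lists of vectors: finitely supported functions 'v list => K.
  The basis vector of a list xs (the formal tensor xs_1 (x) ... (x) xs_d):\<close>

definition basis_vec :: "'v list \<Rightarrow> 'v list \<Rightarrow> 'k::field" where
  "basis_vec xs = (\<lambda>ys. if ys = xs then 1 else 0)"

definition formal_elem :: "nat \<Rightarrow> ('v list \<Rightarrow> 'k::field) \<Rightarrow> bool" where
  "formal_elem d t \<longleftrightarrow> finite {ys. t ys \<noteq> 0} \<and> (\<forall>ys. t ys \<noteq> 0 \<longrightarrow> length ys = d)"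

text \<open>The subspace of relations; the d-th exterior power (alt = True) resp. symmetric power
  (alt = False) of V is the quotient of the free vector space on length-d lists by it.\<close>

inductive_set lozenge_rel :: "('k::field \<Rightarrow> 'v::ab_group_add \<Rightarrow> 'v) \<Rightarrow> bool \<Rightarrow> nat \<Rightarrow> ('v list \<Rightarrow> 'k) set"
  for scale alt d where
  zero: "(\<lambda>_. 0) \<in> lozenge_rel scale alt d"
| add: "f \<in> lozenge_rel scale alt d \<Longrightarrow> g \<in> lozenge_rel scale alt d \<Longrightarrow>
          (\<lambda>ys. f ys + g ys) \<in> lozenge_rel scale alt d"
| smult: "f \<in> lozenge_rel scale alt d \<Longrightarrow> (\<lambda>ys. c * f ys) \<in> lozenge_rel scale alt d"
| lin: "length xs = d \<Longrightarrow> i < d \<Longrightarrow>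
          (\<lambda>ys. basis_vec (xs[i := scale a x + y]) ys - a * basis_vec (xs[i := x]) ys
                 - basis_vec (xs[i := y]) ys) \<in> lozenge_rel scale alt d"
| alt: "alt \<Longrightarrow> length xs = d \<Longrightarrow> i < d \<Longrightarrow> j < d \<Longrightarrow> i \<noteq> j \<Longrightarrow> xs ! i = xs ! j \<Longrightarrow>
          basis_vec xs \<in> lozenge_rel scale alt d"
| sym: "\<not> alt \<Longrightarrow> length xs = d \<Longrightarrow> i < d \<Longrightarrow> j < d \<Longrightarrow>
          (\<lambda>ys. basis_vec xs ys - basis_vec (xs[i := xs ! j, j := xs ! i]) ys) \<in> lozenge_rel scale alt d"

text \<open>Induced bilinear form <t, w>_2, evaluated on a representative t.\<close>

definition pair2 :: "('v list \<Rightarrow> 'k::field) \<Rightarrow> ('v list \<Rightarrow> 'k) \<Rightarrow> 'v \<Rightarrow> 'k" where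
  "pair2 form t w = (\<Sum>ys \<in> {ys. t ys \<noteq> 0}. t ys * form (ys @ [w]))"

definition nondegenerate :: "('k::field \<Rightarrow> 'v::ab_group_add \<Rightarrow> 'v) \<Rightarrow> bool \<Rightarrow> nat \<Rightarrow> ('v list \<Rightarrow> 'k) \<Rightarrow> bool" where
  "nondegenerate scale alt n form \<longleftrightarrow>
     (\<forall>t. formal_elem (n - 1) t \<and> t \<notin> lozenge_rel scale alt (n - 1) \<longrightarrow> (\<exists>w. pair2 form t w \<noteq> 0))"

definition lozenge_indep :: "('k::field \<Rightarrow> 'v::ab_group_add \<Rightarrow> 'v) \<Rightarrow> bool \<Rightarrow> nat \<Rightarrow> nat \<Rightarrow> (nat \<Rightarrow> 'v list \<Rightarrow> 'k) \<Rightarrow> bool" where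
  "lozenge_indep scale alt d m t \<longleftrightarrow>
     (\<forall>c. (\<lambda>ys. \<Sum>i<m. c i * t i ys) \<in> lozenge_rel scale alt d \<longrightarrow> (\<forall>i<m. c i = 0))"

end

theory Submission
  imports Defs
begin

text \<open>The maps w \<mapsto> <t_i, w>_2 are linear functionals on V, and non-degeneracy turns the
  independence of the classes of the t_i into linear independence of these functionals.
  Independent functionals L_0, ..., L_m take arbitrary prescribed values: by induction, L_m cannot
  vanish on the common kernel of L_0, ..., L_(m-1), for otherwise projecting onto that kernel along
  a dual family u_j would exhibit L_m as the combination of the L_j with coefficients L_m(u_j).
  The same projection shows that V is spanned by the common kernel together with the u_j, so in an
  infinite-dimensional V the kernel is not contained in the finite-dimensional U; adding a kernel
  vector to a solution lying in U moves it out of U.\<close>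

context vector_space
begin

lemma dual_family_projection_in_kernel:
  fixes m :: nat
  assumes lin: "\<And>i. i < m \<Longrightarrow> Vector_Spaces.linear scale (*) (L i)"
    and dual: "\<And>i j. i < m \<Longrightarrow> j < m \<Longrightarrow> L i (u j) = (if i = j then 1 else 0)"
    and "i < m"
  shows "L i (v - (\<Sum>j<m. L j v *s u j)) = 0"
proof -
  interpret Li: Vector_Spaces.linear scale "(*)" "L i" by (rule lin[OF \<open>i < m\<close>])
  have "(\<Sum>j<m. L j v * L i (u j)) = (\<Sum>j<m. if j = i then L j v else 0)"
    using dual \<open>i < m\<close> by (intro sum.cong) auto
  also have "\<dots> = L i v" using \<open>i < m\<close> by simp
  finally show ?thesis by (simp add: Li.diff Li.sum Li.scale)
qed

lemma independent_functionals_surjective: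
  fixes m :: nat
  assumes lin: "\<And>i. i < m \<Longrightarrow> Vector_Spaces.linear scale (*) (L i)"
    and indep: "\<And>c. (\<And>w. (\<Sum>i<m. c i * L i w) = 0) \<Longrightarrow> \<forall>i<m. c i = 0"
  shows "\<exists>w. \<forall>i<m. L i w = k i"
  using lin indep
proof (induction m arbitrary: k)
  case 0
  then show ?case by simp
next
  case (Suc m)
  have indep_m: "\<forall>i<m. c i = 0" if "\<And>w. (\<Sum>i<m. c i * L i w) = 0" for c
  proof -
    have "(\<Sum>i<Suc m. (c(m := 0)) i * L i w) = (\<Sum>i<m. c i * L i w)" for w
      by (simp add: lessThan_Suc)
    then have "\<forall>i<Suc m. (c(m := 0)) i = 0" using that by (intro Suc.prems(2)) simp
    show ?thesis
    proof (intro allI impI)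
      fix i assume "i < m"
      with \<open>\<forall>i<Suc m. (c(m := 0)) i = 0\<close> have "(c(m := 0)) i = 0"
        by (blast intro: less_SucI)
      with \<open>i < m\<close> show "c i = 0" by (simp split: if_splits)
    qed
  qed
  have lin_m: "Vector_Spaces.linear scale (*) (L i)" if "i < m" for i
    using Suc.prems(1) that by simp
  note IH = Suc.IH[OF lin_m indep_m]
  have "\<forall>j. \<exists>w. \<forall>i<m. L i w = (if i = j then 1 else 0)"
    by (intro allI IH)
  then obtain u where dual: "\<And>i j. i < m \<Longrightarrow> L i (u j) = (if i = j then 1 else 0)"
    by (auto dest!: choice)
  have "\<exists>z. (\<forall>i<m. L i z = 0) \<and> L m z \<noteq> 0"
  proof (rule ccontr)
    assume no_z: "\<not> ?thesis"
    interpret Lm: Vector_Spaces.linear scale "(*)" "L m" by (rule Suc.prems(1)) simp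
    have Lm_expand: "L m v = (\<Sum>j<m. L j v * L m (u j))" for v
    proof -
      have "L m (v - (\<Sum>j<m. L j v *s u j)) = 0"
        using no_z dual_family_projection_in_kernel[OF lin_m dual] by blast
      then show ?thesis by (simp add: Lm.diff Lm.sum Lm.scale)
    qed
    define c where "c i = (if i = m then 1 else - L m (u i))" for i
    have "(\<Sum>i<Suc m. c i * L i w) = 0" for w
    proof -
      have "(\<Sum>i<Suc m. c i * L i w) = L m w - (\<Sum>j<m. L j w * L m (u j))"
        by (simp add: lessThan_Suc c_def sum_negf mult.commute)
      also have "\<dots> = 0"
        using Lm_expand[of w] by (rule right_minus_eq[THEN iffD2])
      finally show ?thesis .
    qed
    from Suc.prems(2)[OF this] have "c m = 0" by blast
    then show False by (simp add: c_def)
  qed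
  then obtain z where z0: "\<forall>i<m. L i z = 0" and z1: "L m z \<noteq> 0" by blast
  obtain w0 where w0: "\<forall>i<m. L i w0 = k i" using IH by blast
  define w where "w = w0 + ((k m - L m w0) / L m z) *s z"
  have "L i w = k i" if "i < Suc m" for i
  proof -
    interpret Li: Vector_Spaces.linear scale "(*)" "L i"
      by (rule Suc.prems(1)[OF \<open>i < Suc m\<close>])
    have "L i w = L i w0 + ((k m - L m w0) / L m z) * L i z"
      by (simp add: w_def Li.add Li.scale)
    then show ?thesis
      using that w0 z0 z1 by (cases "i = m") auto
  qed
  then show ?case by blast
qed

lemma common_kernel_not_in_finite_span:
  fixes m :: nat
  assumes lin: "\<And>i. i < m \<Longrightarrow> Vector_Spaces.linear scale (*) (L i)"
    and indep: "\<And>c. (\<And>w. (\<Sum>i<m. c i * L i w) = 0) \<Longrightarrow> \<forall>i<m. c i = 0"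
    and infinite_dim: "\<not> (\<exists>B. finite B \<and> span B = UNIV)"
    and "finite B"
  shows "\<exists>z. (\<forall>i<m. L i z = 0) \<and> z \<notin> span B"
proof (rule ccontr)
  assume no_z: "\<not> ?thesis"
  have "\<forall>j. \<exists>w. \<forall>i<m. L i w = (if i = j then 1 else 0)"
    by (intro allI independent_functionals_surjective[where L = L, OF lin indep])
  then obtain u where dual: "\<And>i j. i < m \<Longrightarrow> L i (u j) = (if i = j then 1 else 0)"
    by (auto dest!: choice)
  let ?S = "B \<union> u ` {..<m}"
  have "v \<in> span ?S" for v
  proof -
    have "v - (\<Sum>j<m. L j v *s u j) \<in> span B"
      using no_z dual_family_projection_in_kernel[OF lin dual] by blast
    then have "v - (\<Sum>j<m. L j v *s u j) \<in> span ?S"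
      using span_mono[of B ?S] by blast
    moreover have "(\<Sum>j<m. L j v *s u j) \<in> span ?S"
      by (intro span_sum span_scale span_base) auto
    ultimately show ?thesis
      using span_add by fastforce
  qed
  moreover have "finite ?S" using \<open>finite B\<close> by simp
  ultimately show False using infinite_dim by blast
qed

lemma independent_functionals_solvable_outside_span:
  fixes m :: nat
  assumes lin: "\<And>i. i < m \<Longrightarrow> Vector_Spaces.linear scale (*) (L i)"
    and indep: "\<And>c. (\<And>w. (\<Sum>i<m. c i * L i w) = 0) \<Longrightarrow> \<forall>i<m. c i = 0"
    and infinite_dim: "\<not> (\<exists>B. finite B \<and> span B = UNIV)"
    and "finite B"
  shows "\<exists>w. w \<notin> span B \<and> (\<forall>i<m. L i w = k i)"
proof -
  obtain w0 where w0: "\<forall>i<m. L i w0 = k i"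
    using independent_functionals_surjective[where L = L, OF lin indep] by blast
  obtain z where z: "\<forall>i<m. L i z = 0" "z \<notin> span B"
    using common_kernel_not_in_finite_span[where L = L, OF lin indep infinite_dim \<open>finite B\<close>]
    by blast
  show ?thesis
  proof (cases "w0 \<in> span B")
    case True
    have "L i (w0 + z) = k i" if "i < m" for i
      using w0 z(1) that lin[OF that, THEN Vector_Spaces.linear_iff[THEN iffD1]] by simp
    moreover have "w0 + z \<notin> span B" using True z(2) span_add_eq by blast
    ultimately show ?thesis by blast
  qed (use w0 in blast)
qed

end

lemma linear_functionalI:
  assumes "vector_space scale"
    and "\<And>x y. f (x + y) = f x + f y"
    and "\<And>c x. f (scale c x) = c * f x"
  shows "Vector_Spaces.linear scale (*) f"
  using assms by (auto simp: Vector_Spaces.linear_iff vector_space_def algebra_simps)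

lemma multilinear_form_linear_last:
  assumes "vector_space scale"
    and "multilinear_form scale n form"
    and "Suc (length ys) = n"
  shows "Vector_Spaces.linear scale (*) (\<lambda>w. form (ys @ [w]))"
proof -
  have affine: "form (ys @ [scale a x + y]) = a * form (ys @ [x]) + form (ys @ [y])" for a x y
    using assms(2,3) unfolding multilinear_form_def
    by (auto dest!: spec[of _ "ys @ [x]"] spec[of _ "length ys"] simp: list_update_append)
  have add: "form (ys @ [x + y]) = form (ys @ [x]) + form (ys @ [y])" for x y
    using affine[of 1 x y] assms(1) by (simp add: vector_space.vector_space_assms(4))
  then have "form (ys @ [0]) = 0"
    by (metis add_cancel_right_right add_0)
  then have "form (ys @ [scale c x]) = c * form (ys @ [x])" for c x
    using affine[of c x 0] by simp
  with assms(1) add show ?thesis by (rule linear_functionalI)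
qed

lemma pair2_eq_sum_superset:
  assumes "finite S" "{ys. t ys \<noteq> 0} \<subseteq> S"
  shows "pair2 form t w = (\<Sum>ys\<in>S. t ys * form (ys @ [w]))"
  unfolding pair2_def by (rule sum.mono_neutral_left) (use assms in auto)

lemma pair2_linear:
  fixes scale :: "'k::field \<Rightarrow> 'v::ab_group_add \<Rightarrow> 'v"
  assumes "vector_space scale"
    and "multilinear_form scale n form"
    and "n \<ge> 1"
    and "formal_elem (n - 1) t"
  shows "Vector_Spaces.linear scale (*) (pair2 form t)"
proof -
  have "Vector_Spaces.linear scale (*) (\<lambda>w. form (ys @ [w]))" if "t ys \<noteq> 0" for ys
    using that assms by (intro multilinear_form_linear_last) (auto simp: formal_elem_def)
  then have add: "form (ys @ [x + y]) = form (ys @ [x]) + form (ys @ [y])"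
    and scale: "form (ys @ [scale c x]) = c * form (ys @ [x])" if "t ys \<noteq> 0" for ys c x y
    using that by (simp_all add: Vector_Spaces.linear_iff)
  show ?thesis
  proof (rule linear_functionalI[OF assms(1)])
    show "pair2 form t (x + y) = pair2 form t x + pair2 form t y" for x y
    proof -
      have "pair2 form t (x + y)
          = (\<Sum>ys | t ys \<noteq> 0. t ys * form (ys @ [x]) + t ys * form (ys @ [y]))"
        unfolding pair2_def by (intro sum.cong) (simp_all add: add distrib_left)
      then show ?thesis by (simp add: pair2_def sum.distrib)
    qed
    show "pair2 form t (scale c x) = c * pair2 form t x" for c x
    proof -
      have "pair2 form t (scale c x) = (\<Sum>ys | t ys \<noteq> 0. c * (t ys * form (ys @ [x])))"
        unfolding pair2_def by (intro sum.cong) (simp_all add: scale)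
      then show ?thesis by (simp add: pair2_def sum_distrib_left)
    qed
  qed
qed

lemma formal_elem_lincomb:
  assumes "finite I" "\<And>i. i \<in> I \<Longrightarrow> formal_elem d (t i)"
  shows "formal_elem d (\<lambda>ys. \<Sum>i\<in>I. c i * t i ys)"
proof -
  have supp: "\<exists>i\<in>I. t i ys \<noteq> 0" if "(\<Sum>i\<in>I. c i * t i ys) \<noteq> 0" for ys
    using that sum.neutral[of I "\<lambda>i. c i * t i ys"] by auto
  then have "{ys. (\<Sum>i\<in>I. c i * t i ys) \<noteq> 0} \<subseteq> (\<Union>i\<in>I. {ys. t i ys \<noteq> 0})"
    by blast
  moreover have "finite (\<Union>i\<in>I. {ys. t i ys \<noteq> 0})"
    using assms by (auto simp: formal_elem_def)
  ultimately show ?thesis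
    using supp assms(2) unfolding formal_elem_def by (meson finite_subset)
qed

lemma pair2_lincomb:
  assumes "finite I" "\<And>i. i \<in> I \<Longrightarrow> finite {ys. t i ys \<noteq> 0}"
  shows "pair2 form (\<lambda>ys. \<Sum>i\<in>I. c i * t i ys) w = (\<Sum>i\<in>I. c i * pair2 form (t i) w)"
proof -
  define S where "S = (\<Union>i\<in>I. {ys. t i ys \<noteq> 0})"
  have "finite S" using assms by (simp add: S_def)
  have "{ys. (\<Sum>i\<in>I. c i * t i ys) \<noteq> 0} \<subseteq> S"
    unfolding S_def using sum.neutral[of I] by fastforce
  then have "pair2 form (\<lambda>ys. \<Sum>i\<in>I. c i * t i ys) w
      = (\<Sum>ys\<in>S. (\<Sum>i\<in>I. c i * t i ys) * form (ys @ [w]))"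
    using \<open>finite S\<close> by (rule pair2_eq_sum_superset[rotated])
  also have "\<dots> = (\<Sum>i\<in>I. c i * (\<Sum>ys\<in>S. t i ys * form (ys @ [w])))"
    unfolding sum_distrib_right sum_distrib_left by (subst sum.swap) (simp add: ac_simps)
  also have "\<dots> = (\<Sum>i\<in>I. c i * pair2 form (t i) w)"
    using \<open>finite S\<close>
    by (intro sum.cong refl) (auto simp: S_def intro!: pair2_eq_sum_superset[symmetric])
  finally show ?thesis .
qed

theorem lemma2p9:
  fixes scale :: "'k::field \<Rightarrow> 'v::ab_group_add \<Rightarrow> 'v"
    and alt :: bool and n m :: nat and form :: "'v list \<Rightarrow> 'k"
    and U :: "'v set" and t :: "nat \<Rightarrow> 'v list \<Rightarrow> 'k" and k :: "nat \<Rightarrow> 'k"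
  assumes "vector_space scale"
    and "n \<ge> 2"
    and "multilinear_form scale n form"
    and "if alt then alternating_form n form else symmetric_form n form"
    and "nondegenerate scale alt n form"
    and "\<not> (\<exists>B. finite B \<and> module.span scale B = UNIV)"
    and "module.subspace scale U"
    and "\<exists>B. finite B \<and> module.span scale B = U"
    and "\<forall>i<m. formal_elem (n - 1) (t i)"
    and "lozenge_indep scale alt (n - 1) m t"
  shows "\<exists>w. w \<notin> U \<and> (\<forall>i<m. pair2 form (t i) w = k i)"
proof -
  interpret vector_space scale by (rule assms(1))
  have lin: "Vector_Spaces.linear scale (*) (pair2 form (t i))" if "i < m" for i
    using assms(1-3,9) that by (intro pair2_linear) auto
  have indep: "\<forall>i<m. c i = 0" if "\<And>w. (\<Sum>i<m. c i * pair2 form (t i) w) = 0" for c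
  proof -
    let ?s = "\<lambda>ys. \<Sum>i<m. c i * t i ys"
    have "formal_elem (n - 1) ?s"
      using assms(9) by (intro formal_elem_lincomb) auto
    moreover have "pair2 form ?s w = 0" for w
      using assms(9) that by (subst pair2_lincomb) (auto simp: formal_elem_def)
    ultimately have "?s \<in> lozenge_rel scale alt (n - 1)"
      using assms(5) unfolding nondegenerate_def by blast
    with assms(10) show ?thesis unfolding lozenge_indep_def by blast
  qed
  obtain B where "finite B" "span B = U" using assms(8) by blast
  then show ?thesis
    using independent_functionals_solvable_outside_span
        [where L = "\<lambda>i. pair2 form (t i)", OF lin indep assms(6)]
    by blast
qed

end
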